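(* Let $m\ge1$ and let $1\le K\le N\le 2^m-1$ be integers. Define the bit-level decoding radius $$e^*=\min\Big\{\sum_{i=0}^m i\,a_i \;:\; a_0,\dots,a_m\in\mathbb{Z}_{\ge0},\ \sum_{i=0}^m a_i=N,\ \sum_{i=0}^m a_i2^{-i}\le K-1\Big\}.$$ Then $e^*=2(N-K+1)$ if $K\ge \frac12N+1$, and $e^*=3N-4(K-1)$ if $\frac14N+1\le K\le\frac12N+1$.
   Context: Setting: a Reed–Solomon code of length $N$ and dimension $K$ over $GF(2^m)$ whose symbols are sent as $m$ bits each over a binary erasure channel. $a_i$ is the number of received symbols with exactly $i$ erased bits ("type $i$"), so $\sum_i i a_i$ is the total number of erased bits. Under the proportional multiplicity assignment (each of the $2^i$ candidates of a type-$i$ symbol gets multiplicity $M2^{-i}$), the algebraic soft decoding sufficient condition $S\ge\sqrt{2(K-1)C}$, with score $S=\sum_i a_i M2^{-i}$ and cost $C=\frac12\sum_i a_i2^i(M2^{-i})^2$, is equivalent to $\eta=\sum_i a_i2^{-i}\ge K-1$; $e^*$ is the smallest number of erased bits for which the erasure pattern can bring $\eta$ down to at most $K-1$. *)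

theory Defs
  imports Complex_Main
begin

definition e_star :: "nat \<Rightarrow> nat \<Rightarrow> nat \<Rightarrow> nat" where
  "e_star m N K = Min {(\<Sum>i\<le>m. i * a i) | a :: nat \<Rightarrow> nat.
      (\<Sum>i\<le>m. a i) = N \<and> (\<Sum>i\<le>m. real (a i) / 2 ^ i) \<le> real K - 1}"

end

theory Submission
  imports Defs
begin

text \<open>The constraints are linear in the profile \<open>a\<close>, so any line \<open>c - d x\<close> with \<open>d \<ge> 0\<close>
  lying below all the points \<open>(2\<^sup>-\<^sup>i, i)\<close> gives, after summing \<open>a i\<close> copies of
  \<open>c - d 2\<^sup>-\<^sup>i \<le> i\<close>, the bound \<open>c N - d (K - 1) \<le> \<Sum> i a i\<close> (weak LP duality).
  The chord through the neighbouring points of types \<open>j\<close> and \<open>j + 1\<close> is such a line,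
  and the profile that puts all \<open>N\<close> symbols on these two types and meets
  \<open>\<Sum> a i 2\<^sup>-\<^sup>i = K - 1\<close> with equality attains the bound. The two cases of the
  theorem are \<open>j = 0\<close> and \<open>j = 1\<close>.\<close>

definition feasible_profile :: "nat \<Rightarrow> nat \<Rightarrow> nat \<Rightarrow> (nat \<Rightarrow> nat) \<Rightarrow> bool" where
  "feasible_profile m N K a \<longleftrightarrow>
     (\<Sum>i\<le>m. a i) = N \<and> (\<Sum>i\<le>m. real (a i) / 2 ^ i) \<le> real K - 1"

definition erased_bits :: "nat \<Rightarrow> (nat \<Rightarrow> nat) \<Rightarrow> nat" where
  "erased_bits m a = (\<Sum>i\<le>m. i * a i)"

lemma e_star_eq_Min:
  "e_star m N K = Min (erased_bits m ` Collect (feasible_profile m N K))"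
  unfolding e_star_def
  by (simp add: setcompr_eq_image feasible_profile_def[abs_def] erased_bits_def)

lemma erased_bits_le:
  assumes "feasible_profile m N K a"
  shows "erased_bits m a \<le> m * N"
proof -
  have "erased_bits m a \<le> (\<Sum>i\<le>m. m * a i)"
    unfolding erased_bits_def by (intro sum_mono) simp
  also have "\<dots> = m * N"
    using assms by (simp add: feasible_profile_def sum_distrib_left[symmetric])
  finally show ?thesis .
qed

lemma e_star_eqI:
  assumes "feasible_profile m N K a" and "erased_bits m a = e"
    and "\<And>b. feasible_profile m N K b \<Longrightarrow> e \<le> erased_bits m b"
  shows "e_star m N K = e"
proof -
  have "finite (erased_bits m ` Collect (feasible_profile m N K))"
    by (rule finite_subset[of _ "{..m * N}"]) (auto dest: erased_bits_le)
  then show ?thesis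
    unfolding e_star_eq_Min using assms by (intro Min_eqI) auto
qed

lemma erased_bits_lower_bound:
  assumes "\<And>i. c - d / 2 ^ i \<le> real i" and "0 \<le> d" and "feasible_profile m N K a"
  shows "c * real N - d * (real K - 1) \<le> real (erased_bits m a)"
proof -
  have N: "(\<Sum>i\<le>m. real (a i)) = real N"
    and eta: "(\<Sum>i\<le>m. real (a i) / 2 ^ i) \<le> real K - 1"
    using assms(3) unfolding feasible_profile_def by (auto simp flip: of_nat_sum)
  have "c * real N - d * (real K - 1) \<le> c * real N - d * (\<Sum>i\<le>m. real (a i) / 2 ^ i)"
    using eta assms(2) by (simp add: mult_left_mono)
  also have "\<dots> = (\<Sum>i\<le>m. (c - d / 2 ^ i) * real (a i))"
    by (simp add: N[symmetric] sum_distrib_left sum_subtractf left_diff_distrib)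
  also have "\<dots> \<le> (\<Sum>i\<le>m. real i * real (a i))"
    by (intro sum_mono mult_right_mono assms(1)) simp
  also have "\<dots> = real (erased_bits m a)"
    by (simp add: erased_bits_def)
  finally show ?thesis .
qed

lemma chord_below_types:
  "real (j + 2) - 2 ^ Suc j / 2 ^ i \<le> real i"
proof (cases "i \<le> Suc j")
  case True
  define k where "k = Suc j - i"
  have ik: "i + k = Suc j"
    using True by (simp add: k_def)
  have "Suc k \<le> 2 ^ k"
    by (rule Suc_leI[OF less_exp])
  then have "real (Suc k) \<le> real (2 ^ k)"
    by (simp only: of_nat_le_iff)
  moreover have "2 ^ Suc j / 2 ^ i = (2 :: real) ^ k"
    by (simp add: ik[symmetric] power_add)
  moreover have "real (j + 2) = real i + real k + 1"
    using ik by simp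
  ultimately show ?thesis
    by simp
next
  case False
  then have "real (j + 2) \<le> real i"
    by simp
  moreover have "0 \<le> 2 ^ Suc j / (2 :: real) ^ i"
    by simp
  ultimately show ?thesis
    by linarith
qed

lemma sum_atMost_two_points:
  assumes "Suc j \<le> m" and "\<And>i. i \<noteq> j \<Longrightarrow> i \<noteq> Suc j \<Longrightarrow> f i = 0"
  shows "sum f {..m} = f j + f (Suc j)"
proof -
  have "sum f {..m} = sum f {j, Suc j}"
    using assms by (intro sum.mono_neutral_right) auto
  then show ?thesis by simp
qed

lemma two_type_profile:
  assumes "j < m" and "1 \<le> K"
    and "N \<le> 2 ^ Suc j * (K - 1)" and "2 ^ Suc j * (K - 1) \<le> 2 * N"
  shows "\<exists>a. feasible_profile m N K a \<and> erased_bits m a = (j + 2) * N - 2 ^ Suc j * (K - 1)"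
proof -
  define p where "p = 2 ^ Suc j * (K - 1)"
  define a where "a i = (if i = j then p - N else if i = Suc j then 2 * N - p else 0)" for i
  have two: "sum f {..m} = f j + f (Suc j)"
    if "\<And>i. a i = 0 \<Longrightarrow> f i = 0" for f :: "nat \<Rightarrow> 'a::comm_monoid_add"
    using assms(1) that by (intro sum_atMost_two_points) (auto simp: a_def)
  have "(\<Sum>i\<le>m. a i) = N"
    using two[of a] assms by (simp add: a_def p_def)
  moreover have "(\<Sum>i\<le>m. real (a i) / 2 ^ i) = real K - 1"
  proof -
    have "(\<Sum>i\<le>m. real (a i) / 2 ^ i)
        = (real p - real N) / 2 ^ j + (2 * real N - real p) / 2 ^ Suc j"
      using two[of "\<lambda>i. real (a i) / 2 ^ i"] assms by (simp add: a_def p_def of_nat_diff)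
    also have "\<dots> = real p / 2 ^ Suc j"
      by (simp add: field_simps)
    also have "\<dots> = real K - 1"
      using assms(2) by (simp add: p_def of_nat_diff)
    finally show ?thesis .
  qed
  moreover have "erased_bits m a = (j + 2) * N - p"
  proof -
    have "p \<le> (j + 2) * N"
      using assms(4) by (simp add: p_def trans_le_add2)
    then have "int (j * (p - N) + Suc j * (2 * N - p)) = int ((j + 2) * N - p)"
      using assms(3,4) unfolding p_def
      by (simp only: of_nat_diff of_nat_add of_nat_mult) (simp add: algebra_simps)
    then have "j * (p - N) + Suc j * (2 * N - p) = (j + 2) * N - p"
      by (simp only: of_nat_eq_iff)
    then show ?thesis
      using two[of "\<lambda>i. i * a i"] by (simp add: erased_bits_def a_def)
  qed
  ultimately show ?thesis
    unfolding feasible_profile_def p_def by auto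
qed

theorem e_star_two_types:
  assumes "j < m" and "1 \<le> K"
    and "N \<le> 2 ^ Suc j * (K - 1)" and "2 ^ Suc j * (K - 1) \<le> 2 * N"
  shows "e_star m N K = (j + 2) * N - 2 ^ Suc j * (K - 1)"
proof -
  obtain a where "feasible_profile m N K a"
    and "erased_bits m a = (j + 2) * N - 2 ^ Suc j * (K - 1)"
    using two_type_profile[OF assms] by blast
  then show ?thesis
  proof (rule e_star_eqI)
    fix b assume "feasible_profile m N K b"
    then have "real (j + 2) * real N - 2 ^ Suc j * (real K - 1) \<le> real (erased_bits m b)"
      by (intro erased_bits_lower_bound chord_below_types) simp
    moreover have "2 ^ Suc j * (K - 1) \<le> (j + 2) * N"
      using assms(4) by (simp add: trans_le_add2)
    ultimately have "real ((j + 2) * N - 2 ^ Suc j * (K - 1)) \<le> real (erased_bits m b)"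
      using assms(2) by (simp add: of_nat_diff ring_distribs)
    then show "(j + 2) * N - 2 ^ Suc j * (K - 1) \<le> erased_bits m b"
      by (simp only: of_nat_le_iff)
  qed
qed

theorem theorem1:
  fixes m N K :: nat
  assumes "m \<ge> 1" and "1 \<le> K" and "K \<le> N" and "N \<le> 2 ^ m - 1"
  shows "(real K \<ge> real N / 2 + 1 \<longrightarrow> int (e_star m N K) = 2 * (int N - int K + 1))
       \<and> (real N / 4 + 1 \<le> real K \<and> real K \<le> real N / 2 + 1
            \<longrightarrow> int (e_star m N K) = 3 * int N - 4 * (int K - 1))"
proof -
  have K1: "real (K - 1) = real K - 1"
    using assms(2) by (simp add: of_nat_diff)
  show ?thesis
  proof (intro conjI impI)
    assume "real N / 2 + 1 \<le> real K"
    then have "real N \<le> real (2 * (K - 1))"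
      using K1 by simp
    then have "N \<le> 2 * (K - 1)"
      by (simp only: of_nat_le_iff)
    then have "e_star m N K = 2 * N - 2 * (K - 1)"
      using e_star_two_types[of 0 m K N] assms by simp
    then show "int (e_star m N K) = 2 * (int N - int K + 1)"
      using assms(2,3) by (simp add: of_nat_diff)
  next
    assume "real N / 4 + 1 \<le> real K \<and> real K \<le> real N / 2 + 1"
    then have "real N \<le> real (4 * (K - 1))" and "real (4 * (K - 1)) \<le> real (2 * N)"
      using K1 by simp_all
    then have lo: "N \<le> 4 * (K - 1)" and hi: "4 * (K - 1) \<le> 2 * N"
      by (simp_all only: of_nat_le_iff)
    have "2 \<le> N"
      using lo hi assms(2,3) by linarith
    then have "1 < m"
      using assms(1,4) by (cases "m = 1") auto
    then have "e_star m N K = 3 * N - 4 * (K - 1)"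
      using e_star_two_types[of 1 m K N] lo hi assms(2) by simp
    then show "int (e_star m N K) = 3 * int N - 4 * (int K - 1)"
      using hi assms(2) by (simp add: of_nat_diff)
  qed
qed

end
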